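(* Let $0\to N\xrightarrow{i} G\xrightarrow{p} Q\to 1$ be a short exact sequence of groups with $N$ abelian (written additively), and let $Z^1(G,N)$ be the abelian group (under pointwise addition) of crossed homomorphisms $\phi:G\to N$. With the multiplication $(\phi\diamond\psi)(x):=\phi(i(\psi(x)))$, $Z^1(G,N)$ is an associative (not necessarily unital) ring, and the map $Res:Z^1(G,N)\to End_Q(N)$, $\phi\mapsto\phi\circ i$, is a ring homomorphism.
   Context: $G$ acts on $N$ by conjugation, $x\cdot n=x+n-x$, and a crossed homomorphism satisfies $\phi(x+y)=\phi(x)+x\cdot\phi(y)$. This induces a $Q$-module structure on $N$; $End_Q(N)$ is the ring of $Q$-module endomorphisms of $N$ under pointwise addition and composition. *)

theory Defs
  imports "HOL-Algebra.Coset" "HOL-Algebra.Ring"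
begin

definition rng :: "('a, 'b) ring_scheme \<Rightarrow> bool" where
  "rng R \<longleftrightarrow> abelian_group R \<and>
     (\<forall>x\<in>carrier R. \<forall>y\<in>carrier R. x \<otimes>\<^bsub>R\<^esub> y \<in> carrier R) \<and>
     (\<forall>x\<in>carrier R. \<forall>y\<in>carrier R. \<forall>z\<in>carrier R.
        (x \<otimes>\<^bsub>R\<^esub> y) \<otimes>\<^bsub>R\<^esub> z = x \<otimes>\<^bsub>R\<^esub> (y \<otimes>\<^bsub>R\<^esub> z)) \<and>
     (\<forall>x\<in>carrier R. \<forall>y\<in>carrier R. \<forall>z\<in>carrier R.
        (x \<oplus>\<^bsub>R\<^esub> y) \<otimes>\<^bsub>R\<^esub> z = x \<otimes>\<^bsub>R\<^esub> z \<oplus>\<^bsub>R\<^esub> y \<otimes>\<^bsub>R\<^esub> z) \<and>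
     (\<forall>x\<in>carrier R. \<forall>y\<in>carrier R. \<forall>z\<in>carrier R.
        z \<otimes>\<^bsub>R\<^esub> (x \<oplus>\<^bsub>R\<^esub> y) = z \<otimes>\<^bsub>R\<^esub> x \<oplus>\<^bsub>R\<^esub> z \<otimes>\<^bsub>R\<^esub> y)"

definition rng_hom :: "('a, 'c) ring_scheme \<Rightarrow> ('b, 'd) ring_scheme \<Rightarrow> ('a \<Rightarrow> 'b) set" where
  "rng_hom R S = {h. h \<in> carrier R \<rightarrow> carrier S \<and>
     (\<forall>x\<in>carrier R. \<forall>y\<in>carrier R. h (x \<oplus>\<^bsub>R\<^esub> y) = h x \<oplus>\<^bsub>S\<^esub> h y) \<and>
     (\<forall>x\<in>carrier R. \<forall>y\<in>carrier R. h (x \<otimes>\<^bsub>R\<^esub> y) = h x \<otimes>\<^bsub>S\<^esub> h y)}"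

definition conj_act :: "('g, 'a) monoid_scheme \<Rightarrow> ('n, 'b) monoid_scheme \<Rightarrow> ('n \<Rightarrow> 'g) \<Rightarrow> 'g \<Rightarrow> 'n \<Rightarrow> 'n" where
  "conj_act G N i x n = (THE m. m \<in> carrier N \<and> i m = x \<otimes>\<^bsub>G\<^esub> i n \<otimes>\<^bsub>G\<^esub> inv\<^bsub>G\<^esub> x)"

definition Z1 :: "('g, 'a) monoid_scheme \<Rightarrow> ('n, 'b) monoid_scheme \<Rightarrow> ('n \<Rightarrow> 'g) \<Rightarrow> ('g \<Rightarrow> 'n) set" where
  "Z1 G N i = {\<phi>. \<phi> \<in> carrier G \<rightarrow>\<^sub>E carrier N \<and>
      (\<forall>x\<in>carrier G. \<forall>y\<in>carrier G.
         \<phi> (x \<otimes>\<^bsub>G\<^esub> y) = \<phi> x \<otimes>\<^bsub>N\<^esub> conj_act G N i x (\<phi> y))}"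

definition Z1_ring :: "('g, 'a) monoid_scheme \<Rightarrow> ('n, 'b) monoid_scheme \<Rightarrow> ('n \<Rightarrow> 'g) \<Rightarrow> ('g \<Rightarrow> 'n) ring" where
  "Z1_ring G N i = \<lparr> carrier = Z1 G N i,
      mult = (\<lambda>\<phi> \<psi>. \<lambda>x\<in>carrier G. \<phi> (i (\<psi> x))),
      one = undefined,
      zero = (\<lambda>x\<in>carrier G. \<one>\<^bsub>N\<^esub>),
      add = (\<lambda>\<phi> \<psi>. \<lambda>x\<in>carrier G. \<phi> x \<otimes>\<^bsub>N\<^esub> \<psi> x) \<rparr>"

definition Q_act :: "('g, 'a) monoid_scheme \<Rightarrow> ('n, 'b) monoid_scheme \<Rightarrow> ('n \<Rightarrow> 'g) \<Rightarrow> ('g \<Rightarrow> 'q) \<Rightarrow> 'q \<Rightarrow> 'n \<Rightarrow> 'n" where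
  "Q_act G N i p q n = conj_act G N i (SOME x. x \<in> carrier G \<and> p x = q) n"

definition EndQ :: "('g, 'a) monoid_scheme \<Rightarrow> ('n, 'b) monoid_scheme \<Rightarrow> ('q, 'c) monoid_scheme \<Rightarrow> ('n \<Rightarrow> 'g) \<Rightarrow> ('g \<Rightarrow> 'q) \<Rightarrow> ('n \<Rightarrow> 'n) set" where
  "EndQ G N Q i p = {f. f \<in> hom N N \<and> f \<in> extensional (carrier N) \<and>
      (\<forall>q\<in>carrier Q. \<forall>n\<in>carrier N. f (Q_act G N i p q n) = Q_act G N i p q (f n))}"

definition EndQ_ring :: "('g, 'a) monoid_scheme \<Rightarrow> ('n, 'b) monoid_scheme \<Rightarrow> ('q, 'c) monoid_scheme \<Rightarrow> ('n \<Rightarrow> 'g) \<Rightarrow> ('g \<Rightarrow> 'q) \<Rightarrow> ('n \<Rightarrow> 'n) ring" where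
  "EndQ_ring G N Q i p = \<lparr> carrier = EndQ G N Q i p,
      mult = (\<lambda>f g. \<lambda>n\<in>carrier N. f (g n)),
      one = (\<lambda>n\<in>carrier N. n),
      zero = (\<lambda>n\<in>carrier N. \<one>\<^bsub>N\<^esub>),
      add = (\<lambda>f g. \<lambda>n\<in>carrier N. f n \<otimes>\<^bsub>N\<^esub> g n) \<rparr>"

definition Res :: "('n, 'b) monoid_scheme \<Rightarrow> ('n \<Rightarrow> 'g) \<Rightarrow> ('g \<Rightarrow> 'n) \<Rightarrow> ('n \<Rightarrow> 'n)" where
  "Res N i \<phi> = (\<lambda>n\<in>carrier N. \<phi> (i n))"

end

theory Submission
  imports Defs
begin

text \<open>Since \<open>N\<close> is abelian, it acts trivially on itself by conjugation. Hence a crossed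
  homomorphism \<open>\<phi>\<close> restricts to a homomorphism \<open>\<phi> \<circ> i\<close>, and comparing the cocycle identity
  for \<open>x \<cdot> i n\<close> and for \<open>i (x \<cdot> n) \<cdot> x\<close> (the same element of \<open>G\<close>) shows that \<open>\<phi> \<circ> i\<close>
  commutes with the \<open>G\<close>-action. These two facts make \<open>\<phi> \<diamond> \<psi> = \<phi> \<circ> i \<circ> \<psi>\<close> a crossed
  homomorphism again, make \<open>\<diamond>\<close> left distributive, and make \<open>Res\<close> land in \<open>End\<^sub>Q(N)\<close>; all
  remaining ring axioms hold pointwise.\<close>

locale abelian_normal_embedding =
  fixes G :: "('g, 'a) monoid_scheme" and N :: "('n, 'b) monoid_scheme" and i :: "'n \<Rightarrow> 'g"
  assumes group_G: "group G" and comm_group_N: "comm_group N"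
    and i_hom: "i \<in> hom N G" and i_inj: "inj_on i (carrier N)"
    and image_normal: "i ` carrier N \<lhd> G"
begin

interpretation G: group G by (rule group_G)
interpretation N: comm_group N by (rule comm_group_N)

lemma i_closed [simp]: "n \<in> carrier N \<Longrightarrow> i n \<in> carrier G"
  using i_hom by (auto simp: hom_def)

lemma i_mult: "a \<in> carrier N \<Longrightarrow> b \<in> carrier N \<Longrightarrow> i (a \<otimes>\<^bsub>N\<^esub> b) = i a \<otimes>\<^bsub>G\<^esub> i b"
  using i_hom by (simp add: hom_def)

lemma i_eq_iff: "a \<in> carrier N \<Longrightarrow> b \<in> carrier N \<Longrightarrow> i a = i b \<longleftrightarrow> a = b"
  using i_inj by (auto simp: inj_on_def)

lemma conj_act_unique:
  assumes "x \<in> carrier G" "n \<in> carrier N"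
  shows "\<exists>!m. m \<in> carrier N \<and> i m = x \<otimes>\<^bsub>G\<^esub> i n \<otimes>\<^bsub>G\<^esub> inv\<^bsub>G\<^esub> x"
proof -
  have "x \<otimes>\<^bsub>G\<^esub> i n \<otimes>\<^bsub>G\<^esub> inv\<^bsub>G\<^esub> x \<in> i ` carrier N"
    using assms by (simp add: normal.inv_op_closed2 [OF image_normal])
  then obtain m where "m \<in> carrier N" "i m = x \<otimes>\<^bsub>G\<^esub> i n \<otimes>\<^bsub>G\<^esub> inv\<^bsub>G\<^esub> x"
    by (metis imageE)
  then show ?thesis
    using i_eq_iff by metis
qed

lemma conj_act_closed [simp]: "x \<in> carrier G \<Longrightarrow> n \<in> carrier N \<Longrightarrow> conj_act G N i x n \<in> carrier N"
  unfolding conj_act_def using theI' [OF conj_act_unique] by blast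

lemma i_conj_act:
  "x \<in> carrier G \<Longrightarrow> n \<in> carrier N \<Longrightarrow> i (conj_act G N i x n) = x \<otimes>\<^bsub>G\<^esub> i n \<otimes>\<^bsub>G\<^esub> inv\<^bsub>G\<^esub> x"
  unfolding conj_act_def using theI' [OF conj_act_unique] by blast

lemma conj_act_eqI:
  assumes "x \<in> carrier G" "n \<in> carrier N" "m \<in> carrier N"
    and "i m = x \<otimes>\<^bsub>G\<^esub> i n \<otimes>\<^bsub>G\<^esub> inv\<^bsub>G\<^esub> x"
  shows "conj_act G N i x n = m"
  using assms by (simp flip: i_conj_act add: i_eq_iff)

lemma conj_act_mult:
  assumes "x \<in> carrier G" "a \<in> carrier N" "b \<in> carrier N"
  shows "conj_act G N i x (a \<otimes>\<^bsub>N\<^esub> b) = conj_act G N i x a \<otimes>\<^bsub>N\<^esub> conj_act G N i x b"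
proof (rule conj_act_eqI)
  have "x \<otimes>\<^bsub>G\<^esub> i a \<otimes>\<^bsub>G\<^esub> inv\<^bsub>G\<^esub> x \<otimes>\<^bsub>G\<^esub> (x \<otimes>\<^bsub>G\<^esub> i b \<otimes>\<^bsub>G\<^esub> inv\<^bsub>G\<^esub> x)
      = x \<otimes>\<^bsub>G\<^esub> (i a \<otimes>\<^bsub>G\<^esub> i b) \<otimes>\<^bsub>G\<^esub> inv\<^bsub>G\<^esub> x"
    using assms by (simp add: G.m_assoc G.inv_solve_left')
  then show "i (conj_act G N i x a \<otimes>\<^bsub>N\<^esub> conj_act G N i x b) = x \<otimes>\<^bsub>G\<^esub> i (a \<otimes>\<^bsub>N\<^esub> b) \<otimes>\<^bsub>G\<^esub> inv\<^bsub>G\<^esub> x"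
    using assms by (simp add: i_mult i_conj_act)
qed (use assms in auto)

lemma conj_act_one:
  assumes "x \<in> carrier G"
  shows "conj_act G N i x \<one>\<^bsub>N\<^esub> = \<one>\<^bsub>N\<^esub>"
proof -
  have "conj_act G N i x \<one>\<^bsub>N\<^esub> \<otimes>\<^bsub>N\<^esub> conj_act G N i x \<one>\<^bsub>N\<^esub> = conj_act G N i x \<one>\<^bsub>N\<^esub>"
    using conj_act_mult [OF assms N.one_closed N.one_closed] by simp
  then show ?thesis
    using assms by (simp add: N.l_cancel_one)
qed

lemma conj_act_inv:
  assumes "x \<in> carrier G" "a \<in> carrier N"
  shows "conj_act G N i x (inv\<^bsub>N\<^esub> a) = inv\<^bsub>N\<^esub> conj_act G N i x a"
proof -
  have "conj_act G N i x (inv\<^bsub>N\<^esub> a) \<otimes>\<^bsub>N\<^esub> conj_act G N i x a = \<one>\<^bsub>N\<^esub>"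
    using assms conj_act_mult [OF assms(1) N.inv_closed [OF assms(2)] assms(2)]
    by (simp add: conj_act_one)
  then show ?thesis using assms by (simp add: N.inv_equality)
qed

lemma conj_act_image_trivial:
  assumes "a \<in> carrier N" "m \<in> carrier N"
  shows "conj_act G N i (i a) m = m"
proof (rule conj_act_eqI)
  have "i a \<otimes>\<^bsub>G\<^esub> i m = i m \<otimes>\<^bsub>G\<^esub> i a"
    using assms by (simp flip: i_mult add: N.m_comm)
  then show "i m = i a \<otimes>\<^bsub>G\<^esub> i m \<otimes>\<^bsub>G\<^esub> inv\<^bsub>G\<^esub> i a"
    using assms by (simp add: G.m_assoc)
qed (use assms in auto)

lemma mult_i_conj_act:
  "x \<in> carrier G \<Longrightarrow> n \<in> carrier N \<Longrightarrow> x \<otimes>\<^bsub>G\<^esub> i n = i (conj_act G N i x n) \<otimes>\<^bsub>G\<^esub> x"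
  by (simp add: i_conj_act G.m_assoc)

lemma Z1I:
  "\<lbrakk>\<phi> \<in> carrier G \<rightarrow>\<^sub>E carrier N;
    \<And>x y. \<lbrakk>x \<in> carrier G; y \<in> carrier G\<rbrakk> \<Longrightarrow> \<phi> (x \<otimes>\<^bsub>G\<^esub> y) = \<phi> x \<otimes>\<^bsub>N\<^esub> conj_act G N i x (\<phi> y)\<rbrakk>
    \<Longrightarrow> \<phi> \<in> Z1 G N i"
  unfolding Z1_def by blast

lemma Z1_closed [simp]: "\<phi> \<in> Z1 G N i \<Longrightarrow> x \<in> carrier G \<Longrightarrow> \<phi> x \<in> carrier N"
  unfolding Z1_def by auto

lemma Z1_extensional: "\<phi> \<in> Z1 G N i \<Longrightarrow> \<phi> \<in> extensional (carrier G)"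
  unfolding Z1_def PiE_def by blast

lemma Z1_cocycle:
  "\<lbrakk>\<phi> \<in> Z1 G N i; x \<in> carrier G; y \<in> carrier G\<rbrakk>
    \<Longrightarrow> \<phi> (x \<otimes>\<^bsub>G\<^esub> y) = \<phi> x \<otimes>\<^bsub>N\<^esub> conj_act G N i x (\<phi> y)"
  unfolding Z1_def by blast

lemma Z1_image_mult:
  "\<lbrakk>\<phi> \<in> Z1 G N i; a \<in> carrier N; b \<in> carrier N\<rbrakk>
    \<Longrightarrow> \<phi> (i (a \<otimes>\<^bsub>N\<^esub> b)) = \<phi> (i a) \<otimes>\<^bsub>N\<^esub> \<phi> (i b)"
  by (simp add: i_mult Z1_cocycle conj_act_image_trivial)

lemma Z1_image_conj_act:
  assumes \<phi>: "\<phi> \<in> Z1 G N i" and x: "x \<in> carrier G" and n: "n \<in> carrier N"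
  shows "\<phi> (i (conj_act G N i x n)) = conj_act G N i x (\<phi> (i n))"
proof -
  have "\<phi> (i (conj_act G N i x n)) \<otimes>\<^bsub>N\<^esub> \<phi> x = \<phi> (i (conj_act G N i x n) \<otimes>\<^bsub>G\<^esub> x)"
    using assms by (simp add: Z1_cocycle conj_act_image_trivial)
  also have "\<dots> = \<phi> (x \<otimes>\<^bsub>G\<^esub> i n)"
    using x n by (simp only: mult_i_conj_act)
  also have "\<dots> = conj_act G N i x (\<phi> (i n)) \<otimes>\<^bsub>N\<^esub> \<phi> x"
    using assms by (simp add: Z1_cocycle N.m_comm)
  finally show ?thesis
    using assms by (simp add: N.right_cancel)
qed

lemma Z1_add_closed:
  assumes "\<phi> \<in> Z1 G N i" "\<psi> \<in> Z1 G N i"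
  shows "(\<lambda>x\<in>carrier G. \<phi> x \<otimes>\<^bsub>N\<^esub> \<psi> x) \<in> Z1 G N i"
  using assms by (intro Z1I) (auto simp: Z1_cocycle conj_act_mult N.m_ac)

lemma Z1_zero_closed: "(\<lambda>x\<in>carrier G. \<one>\<^bsub>N\<^esub>) \<in> Z1 G N i"
  by (intro Z1I) (auto simp: conj_act_one)

lemma Z1_neg_closed:
  assumes "\<phi> \<in> Z1 G N i"
  shows "(\<lambda>x\<in>carrier G. inv\<^bsub>N\<^esub> \<phi> x) \<in> Z1 G N i"
  using assms by (intro Z1I) (auto simp: Z1_cocycle conj_act_inv N.inv_mult N.m_ac)

lemma Z1_mult_closed:
  assumes "\<phi> \<in> Z1 G N i" "\<psi> \<in> Z1 G N i"
  shows "(\<lambda>x\<in>carrier G. \<phi> (i (\<psi> x))) \<in> Z1 G N i"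
  using assms by (intro Z1I) (auto simp: Z1_cocycle Z1_image_mult Z1_image_conj_act)

lemma Z1_ring_simps:
  "carrier (Z1_ring G N i) = Z1 G N i"
  "\<phi> \<oplus>\<^bsub>Z1_ring G N i\<^esub> \<psi> = (\<lambda>x\<in>carrier G. \<phi> x \<otimes>\<^bsub>N\<^esub> \<psi> x)"
  "\<phi> \<otimes>\<^bsub>Z1_ring G N i\<^esub> \<psi> = (\<lambda>x\<in>carrier G. \<phi> (i (\<psi> x)))"
  "\<zero>\<^bsub>Z1_ring G N i\<^esub> = (\<lambda>x\<in>carrier G. \<one>\<^bsub>N\<^esub>)"
  by (simp_all add: Z1_ring_def)

lemma Z1_ring_abelian_group: "abelian_group (Z1_ring G N i)"
proof (rule abelian_groupI, simp_all only: Z1_ring_simps)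
  fix \<phi> assume \<phi>: "\<phi> \<in> Z1 G N i"
  show "(\<lambda>x\<in>carrier G. (\<lambda>x\<in>carrier G. \<one>\<^bsub>N\<^esub>) x \<otimes>\<^bsub>N\<^esub> \<phi> x) = \<phi>"
    using \<phi> Z1_extensional [OF \<phi>] by (auto simp: extensional_def)
  show "\<exists>\<psi>\<in>Z1 G N i. (\<lambda>x\<in>carrier G. \<psi> x \<otimes>\<^bsub>N\<^esub> \<phi> x) = (\<lambda>x\<in>carrier G. \<one>\<^bsub>N\<^esub>)"
    using \<phi> by (intro bexI [OF _ Z1_neg_closed]) auto
qed (auto simp: Z1_add_closed Z1_zero_closed N.m_ac)

lemma Z1_ring_rng: "rng (Z1_ring G N i)"
  unfolding rng_def Z1_ring_simps
  by (auto simp: Z1_ring_abelian_group Z1_mult_closed Z1_image_mult intro!: restrict_ext)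

lemma Res_in_EndQ:
  assumes "p ` carrier G = carrier Q" and "\<phi> \<in> Z1 G N i"
  shows "Res N i \<phi> \<in> EndQ G N Q i p"
  unfolding EndQ_def
proof (intro CollectI conjI ballI)
  show "Res N i \<phi> \<in> hom N N"
    using assms(2) by (auto simp: hom_def Res_def Z1_image_mult)
  show "Res N i \<phi> \<in> extensional (carrier N)"
    by (simp add: Res_def)
  fix q n assume "q \<in> carrier Q" "n \<in> carrier N"
  moreover have "(SOME x. x \<in> carrier G \<and> p x = q) \<in> carrier G"
    using \<open>q \<in> carrier Q\<close> assms(1) by (metis (mono_tags, lifting) imageE someI)
  ultimately show "Res N i \<phi> (Q_act G N i p q n) = Q_act G N i p q (Res N i \<phi> n)"
    using assms(2) by (simp add: Q_act_def Res_def Z1_image_conj_act)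
qed

lemma Res_rng_hom:
  assumes "p ` carrier G = carrier Q"
  shows "Res N i \<in> rng_hom (Z1_ring G N i) (EndQ_ring G N Q i p)"
  unfolding rng_hom_def
proof (intro CollectI conjI ballI Pi_I)
  show "Res N i \<phi> \<in> carrier (EndQ_ring G N Q i p)" if "\<phi> \<in> carrier (Z1_ring G N i)" for \<phi>
    using assms that by (simp add: Z1_ring_simps EndQ_ring_def Res_in_EndQ)
qed (auto simp: Z1_ring_simps EndQ_ring_def Res_def intro!: restrict_ext)

end

theorem lemma7:
  fixes G :: "('g, 'a) monoid_scheme" and N :: "('n, 'b) monoid_scheme"
    and Q :: "('q, 'c) monoid_scheme"
    and i :: "'n \<Rightarrow> 'g" and p :: "'g \<Rightarrow> 'q"
  assumes "group G" and "comm_group N" and "group Q"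
    and "i \<in> hom N G" and "inj_on i (carrier N)"
    and "p \<in> hom G Q" and "p ` carrier G = carrier Q"
    and "kernel G Q p = i ` carrier N"
  shows "rng (Z1_ring G N i) \<and> Res N i \<in> rng_hom (Z1_ring G N i) (EndQ_ring G N Q i p)"
proof -
  have "group_hom G Q p"
    using assms by (simp add: group_hom_def group_hom_axioms_def)
  then have "i ` carrier N \<lhd> G"
    using assms(8) by (metis group_hom.normal_kernel)
  then interpret abelian_normal_embedding G N i
    using assms by (simp add: abelian_normal_embedding_def)
  show ?thesis
    using assms(7) by (simp add: Z1_ring_rng Res_rng_hom)
qed

end
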